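(* Under the standing assumptions below, for every $k\in\{0,\dots,n-1\}$: (a) $\prec_k\subseteq\prec_{k+1}$; (b) for all $c,d\in I$, $c\prec_{k+1}d$ implies $c\prec d$ and $\mathrm{var}(c)\setminus X_k\subseteq\mathrm{var}(d)\setminus X_k$; (c) for every $k\in\{0,\dots,n\}$, $\preceq_k$ is a partial order on $I$.
   Context: Standing assumptions: $I$ is a finite set of weighted constraints with default values on a finite domain $D$ such that distinct constraints have distinct variable sets, $\mathcal H(I)=(\mathrm{var}(I),\{\mathrm{var}(c)\mid c\in I\})$ is $\beta$-acyclic, and $(x_1,\dots,x_n)$ is a $\beta$-elimination order of $\mathcal H(I)$ (an enumeration of $\mathrm{var}(I)$ such that for each $k$, $x_{k+1}$ is a nest point—the edges containing it are totally ordered by inclusion—of the hypergraph with vertices $\mathrm{var}(I)\setminus X_k$ and edges $\{e\setminus X_k\}\setminus\{\emptyset\}$). $X_k=\{x_1,\dots,x_k\}$. For $c,d\in I$: $c\prec d$ iff there is $k$ with $\mathrm{var}(c)\setminus X_k\subsetneq\mathrm{var}(d)\setminus X_k$; $c\preceq d$ iff $c\prec d$ or $c=d$. Relations $\prec_k$ are defined inductively: $\prec_0=\emptyset$; $c\prec_{k+1}d$ iff $c\prec_k d$ or there is $e\in I$ with $c\preceq_k e\prec d$ and $x_{k+1}\in\mathrm{var}(d)\cap\mathrm{var}(e)$; here $c\preceq_k d$ iff $c=d$ or $c\prec_k d$. *)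

theory Defs
  imports Main
begin

(* Constraints are abstract elements of type 'c; var c is the variable set
   (scope) of constraint c.  Only scopes matter for the statement. *)

(* X_k = {x_1,...,x_k} for the enumeration xs = [x_1,...,x_n] *)
definition Xk :: "'v list \<Rightarrow> nat \<Rightarrow> 'v set" where
  "Xk xs k = set (take k xs)"

definition nest_point :: "'v set set \<Rightarrow> 'v \<Rightarrow> bool" where
  "nest_point E x \<longleftrightarrow>
     (\<forall>e1\<in>E. \<forall>e2\<in>E. x \<in> e1 \<longrightarrow> x \<in> e2 \<longrightarrow> e1 \<subseteq> e2 \<or> e2 \<subseteq> e1)"

definition beta_elim_order :: "'v set \<Rightarrow> 'v set set \<Rightarrow> 'v list \<Rightarrow> bool" where
  "beta_elim_order V E xs \<longleftrightarrow>
     distinct xs \<and> set xs = V \<and>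
     (\<forall>k < length xs.
        nest_point ({e - Xk xs k | e. e \<in> E} - {{}}) (xs ! k))"

definition var_set :: "('c \<Rightarrow> 'v set) \<Rightarrow> 'c set \<Rightarrow> 'v set" where
  "var_set var I = (\<Union>c\<in>I. var c)"

definition cprec :: "('c \<Rightarrow> 'v set) \<Rightarrow> 'v list \<Rightarrow> 'c \<Rightarrow> 'c \<Rightarrow> bool" where
  "cprec var xs c d \<longleftrightarrow> (\<exists>k. var c - Xk xs k \<subset> var d - Xk xs k)"

(* c \<prec>_k d ; note xs ! k = x_{k+1} *)
primrec cprec_k :: "'c set \<Rightarrow> ('c \<Rightarrow> 'v set) \<Rightarrow> 'v list \<Rightarrow> nat \<Rightarrow> 'c \<Rightarrow> 'c \<Rightarrow> bool" where
  "cprec_k I var xs 0 c d = False"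
| "cprec_k I var xs (Suc k) c d \<longleftrightarrow>
     cprec_k I var xs k c d \<or>
     (\<exists>e\<in>I. (c = e \<or> cprec_k I var xs k c e) \<and> cprec var xs e d \<and>
             xs ! k \<in> var d \<inter> var e)"

definition cpreceq_k :: "'c set \<Rightarrow> ('c \<Rightarrow> 'v set) \<Rightarrow> 'v list \<Rightarrow> nat \<Rightarrow> 'c \<Rightarrow> 'c \<Rightarrow> bool" where
  "cpreceq_k I var xs k c d \<longleftrightarrow> c = d \<or> cprec_k I var xs k c d"

end

theory Submission
  imports Defs
begin

(* Write x_(k+1) = xs ! k and X_k = Xk xs k.  The relation cprec
   (c \<prec> d: the scope of c is strictly contained in that of d once some prefix
   X_j is removed) is a strict order, because the sets X_j grow with j.  The
   nest-point property of x_(k+1) in the residual hypergraph turns a comparison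
   e \<prec> d between two constraints containing x_(k+1) into the inclusion
   var e - X_k \<subseteq> var d - X_k.  By induction on k this shows that c \<prec>_(k+1) d
   implies c \<prec> d together with var c - X_k \<subseteq> var d - X_k (soundness), which
   is part (b).  For part (c),
   reflexivity is built into \<preceq>_k, antisymmetry follows from soundness and the
   irreflexivity of \<prec>, and transitivity of \<prec>_k is proved by induction on k,
   using soundness to transport x_(k+1) along a \<prec>_k step. *)

lemma Xk_mono: "j \<le> k \<Longrightarrow> Xk xs j \<subseteq> Xk xs k"
  unfolding Xk_def by (rule set_take_subset_set_take)

lemma nth_notin_Xk:
  assumes "distinct xs" and "k < length xs"
  shows "xs ! k \<notin> Xk xs k"
proof
  assume "xs ! k \<in> Xk xs k"
  then obtain i where "i < k" and "xs ! i = xs ! k"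
    using assms(2) by (auto simp: Xk_def in_set_conv_nth)
  with assms show False by (simp add: nth_eq_iff_index_eq)
qed

lemma cprec_irrefl: "\<not> cprec var xs c c"
  unfolding cprec_def by blast

text \<open>Removing a larger prefix preserves scope inclusions; this makes \<prec> transitive.\<close>
lemma cprec_trans:
  assumes "cprec var xs a b" and "cprec var xs b c"
  shows "cprec var xs a c"
proof -
  from assms obtain j1 j2 where ab: "var a - Xk xs j1 \<subset> var b - Xk xs j1"
    and bc: "var b - Xk xs j2 \<subset> var c - Xk xs j2"
    unfolding cprec_def by blast
  define m where "m = max j1 j2"
  have "Xk xs j1 \<subseteq> Xk xs m" and "Xk xs j2 \<subseteq> Xk xs m"
    unfolding m_def by (simp_all add: Xk_mono)
  then have ab_m: "var a - Xk xs m \<subseteq> var b - Xk xs m"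
    and bc_m: "var b - Xk xs m \<subseteq> var c - Xk xs m"
    using ab bc by blast+
  have "var a - Xk xs m \<noteq> var c - Xk xs m"
  proof
    assume "var a - Xk xs m = var c - Xk xs m"
    with ab_m bc_m have "var a - Xk xs m = var b - Xk xs m" "var b - Xk xs m = var c - Xk xs m"
      by blast+
    then show False
      using ab bc by (cases "j1 \<le> j2") (auto simp: m_def max_def)
  qed
  with ab_m bc_m show ?thesis
    unfolding cprec_def by blast
qed

text \<open>If x_(k+1) lies in the scopes of e and d and e \<prec> d, then the residual
  scopes of e and d after removing X_k are nested with e below d: the nest-point
  property makes them comparable, and d below e would contradict e \<prec> d.\<close>
lemma nest_point_incl:
  assumes order: "beta_elim_order (var_set var I) (var ` I) xs"
    and k: "k < length xs" and e: "e \<in> I" and d: "d \<in> I"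
    and ed: "cprec var xs e d" and x: "xs ! k \<in> var d \<inter> var e"
  shows "var e - Xk xs k \<subseteq> var d - Xk xs k"
proof -
  let ?E = "{a - Xk xs k | a. a \<in> var ` I} - {{}}"
  have "nest_point ?E (xs ! k)" and "xs ! k \<notin> Xk xs k"
    using order k nth_notin_Xk unfolding beta_elim_order_def by auto
  moreover have "var e - Xk xs k \<in> ?E" "var d - Xk xs k \<in> ?E"
    using e d x \<open>xs ! k \<notin> Xk xs k\<close> by blast+
  ultimately have comparable:
    "var e - Xk xs k \<subseteq> var d - Xk xs k \<or> var d - Xk xs k \<subseteq> var e - Xk xs k"
    using x unfolding nest_point_def by blast
  have "\<not> var d - Xk xs k \<subset> var e - Xk xs k"
  proof
    assume "var d - Xk xs k \<subset> var e - Xk xs k"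
    then have "cprec var xs d e" unfolding cprec_def by blast
    with ed show False using cprec_trans cprec_irrefl by metis
  qed
  with comparable show ?thesis by blast
qed

lemma cprec_k_Suc_iff:
  "cprec_k I var xs (Suc k) c d \<longleftrightarrow>
     cprec_k I var xs k c d \<or>
     (\<exists>e\<in>I. cpreceq_k I var xs k c e \<and> cprec var xs e d \<and> xs ! k \<in> var d \<inter> var e)"
  by (simp add: cpreceq_k_def)

lemma cprec_k_sound:
  assumes order: "beta_elim_order (var_set var I) (var ` I) xs"
  shows "k < length xs \<Longrightarrow> c \<in> I \<Longrightarrow> d \<in> I \<Longrightarrow> cprec_k I var xs (Suc k) c d \<Longrightarrow>
    cprec var xs c d \<and> var c - Xk xs k \<subseteq> var d - Xk xs k"
proof (induction k arbitrary: d)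
  case 0
  then obtain e where "e \<in> I" "c = e" "cprec var xs e d" "xs ! 0 \<in> var d \<inter> var e"
    by (auto simp only: cprec_k.simps)
  with nest_point_incl[OF order 0(1)] 0(3) show ?case by blast
next
  case (Suc k)
  have Xk_step: "Xk xs k \<subseteq> Xk xs (Suc k)" by (simp add: Xk_mono)
  have below_k: "cprec var xs c a \<and> var c - Xk xs (Suc k) \<subseteq> var a - Xk xs (Suc k)"
    if "a \<in> I" "cprec_k I var xs (Suc k) c a" for a
  proof -
    have "cprec var xs c a \<and> var c - Xk xs k \<subseteq> var a - Xk xs k"
      using Suc.IH[OF _ Suc.prems(2) that] Suc.prems(1) by simp
    with Xk_step show ?thesis by blast
  qed
  from Suc.prems(4) consider
      "cprec_k I var xs (Suc k) c d"
    | e where "e \<in> I" "cpreceq_k I var xs (Suc k) c e" "cprec var xs e d"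
        "xs ! Suc k \<in> var d \<inter> var e"
    unfolding cprec_k_Suc_iff by blast
  then show ?case
  proof cases
    case old: 1
    then show ?thesis using below_k[OF Suc.prems(3)] by blast
  next
    case new: (2 e)
    have "var e - Xk xs (Suc k) \<subseteq> var d - Xk xs (Suc k)"
      using nest_point_incl[OF order Suc.prems(1) new(1) Suc.prems(3) new(3,4)] .
    moreover have "c = e \<or> (cprec var xs c e \<and> var c - Xk xs (Suc k) \<subseteq> var e - Xk xs (Suc k))"
      using new(2) below_k[OF new(1)] unfolding cpreceq_k_def by blast
    moreover note cprec_trans[OF _ new(3), of c]
    ultimately show ?thesis
      using new(3) by blast
  qed
qed

lemma cprec_k_sound_at:
  assumes order: "beta_elim_order (var_set var I) (var ` I) xs"
    and k: "k \<le> length xs" and c: "c \<in> I" and d: "d \<in> I"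
    and cd: "cprec_k I var xs k c d"
  shows "cprec var xs c d \<and> var c - Xk xs k \<subseteq> var d - Xk xs k"
proof (cases k)
  case 0
  from cd show ?thesis unfolding 0 by simp
next
  case (Suc j)
  have "j < length xs" using k Suc by simp
  from cprec_k_sound[OF order this c d cd[unfolded Suc]]
  have "cprec var xs c d" "var c - Xk xs j \<subseteq> var d - Xk xs j" by simp_all
  moreover have "Xk xs j \<subseteq> Xk xs k" by (simp add: Suc Xk_mono)
  ultimately show ?thesis by blast
qed

text \<open>The induction step composes two \<prec>_(k+1) steps.  When the first is a
  new step through some e with x_(k+1) in its scope, soundness of the second step
  carries x_(k+1) into the final scope and e \<prec> d into e \<prec> f.\<close>
lemma cprec_k_trans:
  assumes order: "beta_elim_order (var_set var I) (var ` I) xs"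
  shows "k \<le> length xs \<Longrightarrow> c \<in> I \<Longrightarrow> d \<in> I \<Longrightarrow> f \<in> I \<Longrightarrow>
    cprec_k I var xs k c d \<Longrightarrow> cprec_k I var xs k d f \<Longrightarrow> cprec_k I var xs k c f"
proof (induction k arbitrary: c d f)
  case 0
  then show ?case by simp
next
  case (Suc k)
  let ?x = "xs ! k"
  have k: "k < length xs" using Suc.prems(1) by simp
  have x_new: "?x \<notin> Xk xs k"
    using order k nth_notin_Xk unfolding beta_elim_order_def by blast
  have IH: "cprec_k I var xs k a a'"
    if "a \<in> I" "b \<in> I" "a' \<in> I" "cprec_k I var xs k a b" "cprec_k I var xs k b a'" for a b a'
    using Suc.IH[OF less_imp_le[OF k] that] .
  have sound: "cprec var xs a b \<and> var a - Xk xs k \<subseteq> var b - Xk xs k"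
    if "a \<in> I" "b \<in> I" "cprec_k I var xs k a b" for a b
    using cprec_k_sound_at[OF order less_imp_le[OF k] that] .
  have new_step: "cprec_k I var xs (Suc k) a b"
    if "e \<in> I" "cpreceq_k I var xs k a e" "cprec var xs e b" "?x \<in> var b \<inter> var e" for a b e
    using that unfolding cprec_k_Suc_iff by blast
  from Suc.prems(5) consider
      "cprec_k I var xs k c d"
    | e where "e \<in> I" "cpreceq_k I var xs k c e" "cprec var xs e d" "?x \<in> var d \<inter> var e"
    unfolding cprec_k_Suc_iff by blast
  then show ?case
  proof cases
    case old_cd: 1
    from Suc.prems(6) consider
        "cprec_k I var xs k d f"
      | e where "e \<in> I" "cpreceq_k I var xs k d e" "cprec var xs e f" "?x \<in> var f \<inter> var e"
      unfolding cprec_k_Suc_iff by blast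
    then show ?thesis
    proof cases
      case old_df: 1
      have "cprec_k I var xs k c f" using IH[OF Suc.prems(2-4) old_cd old_df] .
      then show ?thesis unfolding cprec_k_Suc_iff by blast
    next
      case new_df: (2 e)
      have "cprec_k I var xs k c e"
      proof (cases "d = e")
        case False
        with new_df(2) have "cprec_k I var xs k d e" unfolding cpreceq_k_def by blast
        with IH[OF Suc.prems(2,3) new_df(1) old_cd] show ?thesis .
      qed (use old_cd in simp)
      then have "cpreceq_k I var xs k c e" unfolding cpreceq_k_def ..
      then show ?thesis by (rule new_step[OF new_df(1) _ new_df(3,4)])
    qed
  next
    case new_cd: (2 e)
    from Suc.prems(6) consider
        "cprec_k I var xs k d f"
      | e' where "e' \<in> I" "cpreceq_k I var xs k d e'" "cprec var xs e' f" "?x \<in> var f \<inter> var e'"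
      unfolding cprec_k_Suc_iff by blast
    then show ?thesis
    proof cases
      case old_df: 1
      with sound Suc.prems(3,4) have "cprec var xs d f" "var d - Xk xs k \<subseteq> var f - Xk xs k"
        by blast+
      then have "cprec var xs e f" "?x \<in> var f"
        using cprec_trans[OF new_cd(3)] new_cd(4) x_new by blast+
      with new_cd(4) show ?thesis by (intro new_step[OF new_cd(1,2)]) blast+
    next
      case new_df: (2 e')
      have "d = e' \<or> cprec var xs d e'"
        using new_df(1,2) sound Suc.prems(3) unfolding cpreceq_k_def by blast
      then have "cprec var xs e f"
        using new_cd(3) new_df(3) cprec_trans by metis
      with new_cd(4) new_df(4) show ?thesis
        by (intro new_step[OF new_cd(1,2)]) blast+
    qed
  qed
qed

lemma cpreceq_k_partial_order:
  assumes order: "beta_elim_order (var_set var I) (var ` I) xs" and k: "k \<le> length xs"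
  shows "partial_order_on I {(c, d). c \<in> I \<and> d \<in> I \<and> cpreceq_k I var xs k c d}"
    (is "partial_order_on I ?R")
proof -
  have "refl_on I ?R" unfolding refl_on_def cpreceq_k_def by blast
  moreover have "trans ?R"
  proof (rule transI)
    fix c d f assume "(c, d) \<in> ?R" "(d, f) \<in> ?R"
    then have "c \<in> I" "d \<in> I" "f \<in> I"
      and "c = d \<or> cprec_k I var xs k c d" "d = f \<or> cprec_k I var xs k d f"
      unfolding cpreceq_k_def by auto
    with cprec_k_trans[OF order k, of c d f] show "(c, f) \<in> ?R"
      unfolding cpreceq_k_def by blast
  qed
  moreover have "antisym ?R"
  proof (rule antisymI)
    fix c d assume "(c, d) \<in> ?R" "(d, c) \<in> ?R"
    show "c = d"
    proof (rule ccontr)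
      assume "c \<noteq> d"
      with \<open>(c, d) \<in> ?R\<close> \<open>(d, c) \<in> ?R\<close>
      have "cprec var xs c d" "cprec var xs d c"
        using cprec_k_sound_at[OF order k] unfolding cpreceq_k_def by blast+
      then show False using cprec_trans cprec_irrefl by metis
    qed
  qed
  ultimately show ?thesis
    unfolding partial_order_on_def preorder_on_def by blast
qed

theorem lemma4:
  fixes I :: "'c set" and var :: "'c \<Rightarrow> 'v set" and xs :: "'v list"
  assumes finI: "finite I"
    and inj: "inj_on var I"
    and order: "beta_elim_order (var_set var I) (var ` I) xs"
  shows "(\<forall>k < length xs.
            (\<forall>c\<in>I. \<forall>d\<in>I. cprec_k I var xs k c d \<longrightarrow> cprec_k I var xs (Suc k) c d) \<and>
            (\<forall>c\<in>I. \<forall>d\<in>I. cprec_k I var xs (Suc k) c d \<longrightarrow>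
                 cprec var xs c d \<and> var c - Xk xs k \<subseteq> var d - Xk xs k))
       \<and> (\<forall>k \<le> length xs.
            partial_order_on I {(c, d). c \<in> I \<and> d \<in> I \<and> cpreceq_k I var xs k c d})"
proof (intro conjI allI impI ballI)
  fix k c d
  assume "cprec_k I var xs k c d"
  then show "cprec_k I var xs (Suc k) c d" unfolding cprec_k_Suc_iff by blast
next
  fix k c d
  assume "k < length xs" "c \<in> I" "d \<in> I" "cprec_k I var xs (Suc k) c d"
  from cprec_k_sound[OF order this]
  show "cprec var xs c d" "var c - Xk xs k \<subseteq> var d - Xk xs k" by blast+
next
  fix k
  assume "k \<le> length xs"
  from cpreceq_k_partial_order[OF order this]
  show "partial_order_on I {(c, d). c \<in> I \<and> d \<in> I \<and> cpreceq_k I var xs k c d}" .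
qed

end
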